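(* Let $(X,d,\ll,\le,\tau)$ and $(Y,\widetilde d,\widetilde\ll,\widetilde\le,\widetilde\tau)$ be Lorentzian length spaces. If $(X,d,\ll,\le,\tau)$ is strongly causal, $(Y,\widetilde d)$ is locally compact, and $f:X\to Y$ is a surjective distance homothetic map, then $f$ is a homeomorphism (with respect to the metric topologies) and $(Y,\widetilde d,\widetilde\ll,\widetilde\le,\widetilde\tau)$ is strongly causal.
   Context: A causal space $(X,\ll,\le)$ is a set $X$ with two transitive relations $\ll,\le$ such that $\le$ is reflexive and $x\ll y\Rightarrow x\le y$; write $p<q$ if $p\le q$ and $p\neq q$. Set $I^+(x)=\{y: x\ll y\}$, $I^-(x)=\{y: y\ll x\}$, $J^+(x)=\{y:x\le y\}$, $J^-(x)=\{y:y\le x\}$. A Lorentzian pre-length space $(X,d,\ll,\le,\tau)$ is a causal space together with a metric $d$ on $X$ and a function $\tau:X\times X\to[0,\infty]$ that is lower semicontinuous with respect to the topology of $d$, satisfies $\tau(x,z)\ge\tau(x,y)+\tau(y,z)$ whenever $x\le y\le z$, $\tau(x,y)=0$ if $x\not\le y$, and $\tau(x,y)>0\iff x\ll y$. All topological notions refer to the metric topology of $d$. A future directed causal (resp. timelike) curve is a non-constant Lipschitz map $\gamma:I\to X$ ($I\subset\mathbb R$ an interval) with $\gamma(s)\le\gamma(t)$ (resp. $\gamma(s)\ll\gamma(t)$) for all $s<t$. For a future directed causal $\gamma:[a,b]\to X$, $L_\tau(\gamma)=\inf\sum_{i=0}^{N-1}\tau(\gamma(t_i),\gamma(t_{i+1}))$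 over all partitions $a=t_0<\dots<t_N=b$. The space is causally path connected if whenever $x\le y$ (resp. $x\ll y$) there is a future directed causal (resp. timelike) curve from $x$ to $y$. For open $U\subset X$, $p\le_U q$ means there is a future directed causal curve from $p$ to $q$ with image in $U$. A neighborhood $U$ is causally closed if whenever $p_n\le_U q_n$ with $p_n\to p\in U$, $q_n\to q\in U$, then $p\le_U q$; the space is locally causally closed if every point has a causally closed neighborhood. The space is localizable if every $x$ has a neighborhood $\Omega_x$ such that: (i) all causal curves contained in $\Omega_x$ have uniformly bounded $d$-length; (ii) there is a continuous $\omega_x:\Omega_x\times\Omega_x\to[0,\infty)$ such that $(\Omega_x,d|_{\Omega_x\times\Omega_x},\ll|_{\Omega_x},\le|_{\Omega_x},\omega_x)$ is a Lorentzian pre-length space, and $I^\pm(y)\cap\Omega_x\ne\emptyset$ for every $y\in\Omega_x$; (iii) for all $p,q\in\Omega_x$ with $p<q$ there is a future causal curve $\gamma_{p,q}$ from $p$ to $q$ with $L_\tau(\gamma_{p,q})\ge L_\tau(\gamma)$ for every future causal curve $\gamma\subset\Omega_x$ from $p$ to $q$, and $L_\tau(\gamma_{p,q})=\omega_x(p,q)$. A Lorentzian length space is a causally path connected, locally causally closed, localizable Lorentzian pre-length space with $\tau(x,y)=\sup\{L_\tau(\gamma):\gamma$ a future causal curve from $x$ to $y\}$. Strongly causal: the Alexandrov topology (subbase $\{I^+(x)\cap I^-(y)\}$) coincides with the metric topology. A map $f:X\to Y$ is distance homothetic if there is $c>0$ with $\widetilde\tau(f(p),f(q))=c\,\tau(p,q)$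 for all $p,q\in X$. *)

theory Defs
  imports "HOL-Analysis.Analysis"
begin

definition causal_space :: "'a set \<Rightarrow> ('a \<Rightarrow> 'a \<Rightarrow> bool) \<Rightarrow> ('a \<Rightarrow> 'a \<Rightarrow> bool) \<Rightarrow> bool" where
  "causal_space X ll le \<longleftrightarrow>
     (\<forall>x\<in>X. \<forall>y\<in>X. \<forall>z\<in>X. ll x y \<and> ll y z \<longrightarrow> ll x z) \<and>
     (\<forall>x\<in>X. \<forall>y\<in>X. \<forall>z\<in>X. le x y \<and> le y z \<longrightarrow> le x z) \<and>
     (\<forall>x\<in>X. le x x) \<and>
     (\<forall>x\<in>X. \<forall>y\<in>X. ll x y \<longrightarrow> le x y)"

definition lsc_on :: "'a set \<Rightarrow> ('a \<Rightarrow> 'a \<Rightarrow> real) \<Rightarrow> ('a \<Rightarrow> 'a \<Rightarrow> ennreal) \<Rightarrow> bool" where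
  "lsc_on X d t \<longleftrightarrow>
     (\<forall>p\<in>X. \<forall>q\<in>X. \<forall>c. c < t p q \<longrightarrow>
        (\<exists>e>0. \<forall>p'\<in>X. \<forall>q'\<in>X. d p p' < e \<and> d q q' < e \<longrightarrow> c < t p' q'))"

definition cont2_on :: "'a set \<Rightarrow> ('a \<Rightarrow> 'a \<Rightarrow> real) \<Rightarrow> ('a \<Rightarrow> 'a \<Rightarrow> real) \<Rightarrow> bool" where
  "cont2_on X d w \<longleftrightarrow>
     (\<forall>p\<in>X. \<forall>q\<in>X. \<forall>\<epsilon>>0. \<exists>\<delta>>0. \<forall>p'\<in>X. \<forall>q'\<in>X.
        d p p' < \<delta> \<and> d q q' < \<delta> \<longrightarrow> \<bar>w p' q' - w p q\<bar> < \<epsilon>)"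

definition lorentzian_pre_length_space ::
  "'a set \<Rightarrow> ('a \<Rightarrow> 'a \<Rightarrow> real) \<Rightarrow> ('a \<Rightarrow> 'a \<Rightarrow> bool) \<Rightarrow> ('a \<Rightarrow> 'a \<Rightarrow> bool) \<Rightarrow> ('a \<Rightarrow> 'a \<Rightarrow> ennreal) \<Rightarrow> bool" where
  "lorentzian_pre_length_space X d ll le t \<longleftrightarrow>
     Metric_space X d \<and> causal_space X ll le \<and> lsc_on X d t \<and>
     (\<forall>x\<in>X. \<forall>y\<in>X. \<forall>z\<in>X. le x y \<and> le y z \<longrightarrow> t x y + t y z \<le> t x z) \<and>
     (\<forall>x\<in>X. \<forall>y\<in>X. \<not> le x y \<longrightarrow> t x y = 0) \<and>
     (\<forall>x\<in>X. \<forall>y\<in>X. t x y > 0 \<longleftrightarrow> ll x y)"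

definition lipschitz_curve :: "'a set \<Rightarrow> ('a \<Rightarrow> 'a \<Rightarrow> real) \<Rightarrow> (real \<Rightarrow> 'a) \<Rightarrow> real set \<Rightarrow> bool" where
  "lipschitz_curve X d \<gamma> I \<longleftrightarrow>
     is_interval I \<and> \<gamma> ` I \<subseteq> X \<and>
     (\<exists>L. \<forall>s\<in>I. \<forall>t\<in>I. d (\<gamma> s) (\<gamma> t) \<le> L * \<bar>s - t\<bar>) \<and>
     (\<exists>s\<in>I. \<exists>t\<in>I. \<gamma> s \<noteq> \<gamma> t)"

definition fd_causal_curve ::
  "'a set \<Rightarrow> ('a \<Rightarrow> 'a \<Rightarrow> real) \<Rightarrow> ('a \<Rightarrow> 'a \<Rightarrow> bool) \<Rightarrow> (real \<Rightarrow> 'a) \<Rightarrow> real set \<Rightarrow> bool" where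
  "fd_causal_curve X d le \<gamma> I \<longleftrightarrow>
     lipschitz_curve X d \<gamma> I \<and> (\<forall>s\<in>I. \<forall>t\<in>I. s < t \<longrightarrow> le (\<gamma> s) (\<gamma> t))"

definition fd_timelike_curve ::
  "'a set \<Rightarrow> ('a \<Rightarrow> 'a \<Rightarrow> real) \<Rightarrow> ('a \<Rightarrow> 'a \<Rightarrow> bool) \<Rightarrow> (real \<Rightarrow> 'a) \<Rightarrow> real set \<Rightarrow> bool" where
  "fd_timelike_curve X d ll \<gamma> I \<longleftrightarrow>
     lipschitz_curve X d \<gamma> I \<and> (\<forall>s\<in>I. \<forall>t\<in>I. s < t \<longrightarrow> ll (\<gamma> s) (\<gamma> t))"

definition causal_curve_from ::
  "'a set \<Rightarrow> ('a \<Rightarrow> 'a \<Rightarrow> real) \<Rightarrow> ('a \<Rightarrow> 'a \<Rightarrow> bool) \<Rightarrow> (real \<Rightarrow> 'a) \<Rightarrow> real \<Rightarrow> real \<Rightarrow> 'a \<Rightarrow> 'a \<Rightarrow> bool" where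
  "causal_curve_from X d le \<gamma> a b x y \<longleftrightarrow>
     a < b \<and> fd_causal_curve X d le \<gamma> {a..b} \<and> \<gamma> a = x \<and> \<gamma> b = y"

definition timelike_curve_from ::
  "'a set \<Rightarrow> ('a \<Rightarrow> 'a \<Rightarrow> real) \<Rightarrow> ('a \<Rightarrow> 'a \<Rightarrow> bool) \<Rightarrow> (real \<Rightarrow> 'a) \<Rightarrow> real \<Rightarrow> real \<Rightarrow> 'a \<Rightarrow> 'a \<Rightarrow> bool" where
  "timelike_curve_from X d ll \<gamma> a b x y \<longleftrightarrow>
     a < b \<and> fd_timelike_curve X d ll \<gamma> {a..b} \<and> \<gamma> a = x \<and> \<gamma> b = y"

definition partitions :: "real \<Rightarrow> real \<Rightarrow> (nat \<times> (nat \<Rightarrow> real)) set" where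
  "partitions a b = {(N, s). 0 < N \<and> s 0 = a \<and> s N = b \<and> (\<forall>i<N. s i < s (Suc i))}"

definition tau_length :: "('a \<Rightarrow> 'a \<Rightarrow> ennreal) \<Rightarrow> (real \<Rightarrow> 'a) \<Rightarrow> real \<Rightarrow> real \<Rightarrow> ennreal" where
  "tau_length t \<gamma> a b =
     (INF (N, s)\<in>partitions a b. \<Sum>i<N. t (\<gamma> (s i)) (\<gamma> (s (Suc i))))"

definition d_length :: "('a \<Rightarrow> 'a \<Rightarrow> real) \<Rightarrow> (real \<Rightarrow> 'a) \<Rightarrow> real set \<Rightarrow> ennreal" where
  "d_length d \<gamma> I =
     (SUP (N, s)\<in>{(N, s). (\<forall>i\<le>N. s i \<in> I) \<and> (\<forall>i<N. s i < s (Suc i))}.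
        \<Sum>i<N. ennreal (d (\<gamma> (s i)) (\<gamma> (s (Suc i)))))"

definition causally_path_connected ::
  "'a set \<Rightarrow> ('a \<Rightarrow> 'a \<Rightarrow> real) \<Rightarrow> ('a \<Rightarrow> 'a \<Rightarrow> bool) \<Rightarrow> ('a \<Rightarrow> 'a \<Rightarrow> bool) \<Rightarrow> bool" where
  "causally_path_connected X d ll le \<longleftrightarrow>
     (\<forall>x\<in>X. \<forall>y\<in>X. le x y \<and> x \<noteq> y \<longrightarrow> (\<exists>\<gamma> a b. causal_curve_from X d le \<gamma> a b x y)) \<and>
     (\<forall>x\<in>X. \<forall>y\<in>X. ll x y \<longrightarrow> (\<exists>\<gamma> a b. timelike_curve_from X d ll \<gamma> a b x y))"

definition le_in ::
  "'a set \<Rightarrow> ('a \<Rightarrow> 'a \<Rightarrow> real) \<Rightarrow> ('a \<Rightarrow> 'a \<Rightarrow> bool) \<Rightarrow> 'a set \<Rightarrow> 'a \<Rightarrow> 'a \<Rightarrow> bool" where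
  "le_in X d le U p q \<longleftrightarrow>
     p = q \<or> (\<exists>\<gamma> a b. causal_curve_from X d le \<gamma> a b p q \<and> \<gamma> ` {a..b} \<subseteq> U)"

definition causally_closed ::
  "'a set \<Rightarrow> ('a \<Rightarrow> 'a \<Rightarrow> real) \<Rightarrow> ('a \<Rightarrow> 'a \<Rightarrow> bool) \<Rightarrow> 'a set \<Rightarrow> bool" where
  "causally_closed X d le U \<longleftrightarrow>
     openin (Metric_space.mtopology X d) U \<and>
     (\<forall>pn qn p q. (\<forall>n. le_in X d le U (pn n) (qn n)) \<and> p \<in> U \<and> q \<in> U \<and>
        (\<lambda>n. d (pn n) p) \<longlonglongrightarrow> 0 \<and> (\<lambda>n. d (qn n) q) \<longlonglongrightarrow> 0 \<longrightarrow> le_in X d le U p q)"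

definition locally_causally_closed ::
  "'a set \<Rightarrow> ('a \<Rightarrow> 'a \<Rightarrow> real) \<Rightarrow> ('a \<Rightarrow> 'a \<Rightarrow> bool) \<Rightarrow> bool" where
  "locally_causally_closed X d le \<longleftrightarrow> (\<forall>x\<in>X. \<exists>U. x \<in> U \<and> causally_closed X d le U)"

definition is_nbhd :: "'a set \<Rightarrow> ('a \<Rightarrow> 'a \<Rightarrow> real) \<Rightarrow> 'a \<Rightarrow> 'a set \<Rightarrow> bool" where
  "is_nbhd X d x N \<longleftrightarrow> N \<subseteq> X \<and> (\<exists>V. openin (Metric_space.mtopology X d) V \<and> x \<in> V \<and> V \<subseteq> N)"

definition localizable ::
  "'a set \<Rightarrow> ('a \<Rightarrow> 'a \<Rightarrow> real) \<Rightarrow> ('a \<Rightarrow> 'a \<Rightarrow> bool) \<Rightarrow> ('a \<Rightarrow> 'a \<Rightarrow> bool) \<Rightarrow> ('a \<Rightarrow> 'a \<Rightarrow> ennreal) \<Rightarrow> bool" where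
  "localizable X d ll le t \<longleftrightarrow>
     (\<forall>x\<in>X. \<exists>\<Omega> (\<omega> :: 'a \<Rightarrow> 'a \<Rightarrow> real). is_nbhd X d x \<Omega> \<and>
        \<comment> \<open>(i)\<close>
        (\<exists>C::real. \<forall>\<gamma> I. fd_causal_curve X d le \<gamma> I \<and> \<gamma> ` I \<subseteq> \<Omega> \<longrightarrow> d_length d \<gamma> I \<le> ennreal C) \<and>
        \<comment> \<open>(ii)\<close>
        (\<forall>p\<in>\<Omega>. \<forall>q\<in>\<Omega>. 0 \<le> \<omega> p q) \<and> cont2_on \<Omega> d \<omega> \<and>
        lorentzian_pre_length_space \<Omega> d ll le (\<lambda>p q. ennreal (\<omega> p q)) \<and>
        (\<forall>y\<in>\<Omega>. (\<exists>z\<in>\<Omega>. ll y z) \<and> (\<exists>z\<in>\<Omega>. ll z y)) \<and>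
        \<comment> \<open>(iii)\<close>
        (\<forall>p\<in>\<Omega>. \<forall>q\<in>\<Omega>. le p q \<and> p \<noteq> q \<longrightarrow>
           (\<exists>\<gamma> a b. causal_curve_from X d le \<gamma> a b p q \<and>
              tau_length t \<gamma> a b = ennreal (\<omega> p q) \<and>
              (\<forall>\<gamma>' a' b'. causal_curve_from X d le \<gamma>' a' b' p q \<and> \<gamma>' ` {a'..b'} \<subseteq> \<Omega> \<longrightarrow>
                 tau_length t \<gamma>' a' b' \<le> tau_length t \<gamma> a b))))"

definition lorentzian_length_space ::
  "'a set \<Rightarrow> ('a \<Rightarrow> 'a \<Rightarrow> real) \<Rightarrow> ('a \<Rightarrow> 'a \<Rightarrow> bool) \<Rightarrow> ('a \<Rightarrow> 'a \<Rightarrow> bool) \<Rightarrow> ('a \<Rightarrow> 'a \<Rightarrow> ennreal) \<Rightarrow> bool" where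
  "lorentzian_length_space X d ll le t \<longleftrightarrow>
     lorentzian_pre_length_space X d ll le t \<and>
     causally_path_connected X d ll le \<and>
     locally_causally_closed X d le \<and>
     localizable X d ll le t \<and>
     (\<forall>x\<in>X. \<forall>y\<in>X. t x y =
        (SUP (\<gamma>, a, b)\<in>{(\<gamma>, a, b). causal_curve_from X d le \<gamma> a b x y}. tau_length t \<gamma> a b))"

text \<open>Alexandrov topology on X: generated by the subbase {I^+(x) \<inter> I^-(y)} (together with
 X itself, the empty finite intersection).\<close>
definition alexandrov_topology :: "'a set \<Rightarrow> ('a \<Rightarrow> 'a \<Rightarrow> bool) \<Rightarrow> 'a topology" where
  "alexandrov_topology X ll =
     topology_generated_by (insert X {{z\<in>X. ll x z} \<inter> {z\<in>X. ll z y} | x y. x \<in> X \<and> y \<in> X})"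

definition strongly_causal :: "'a set \<Rightarrow> ('a \<Rightarrow> 'a \<Rightarrow> real) \<Rightarrow> ('a \<Rightarrow> 'a \<Rightarrow> bool) \<Rightarrow> bool" where
  "strongly_causal X d ll \<longleftrightarrow> alexandrov_topology X ll = Metric_space.mtopology X d"

definition distance_homothetic ::
  "'a set \<Rightarrow> ('a \<Rightarrow> 'a \<Rightarrow> ennreal) \<Rightarrow> ('b \<Rightarrow> 'b \<Rightarrow> ennreal) \<Rightarrow> ('a \<Rightarrow> 'b) \<Rightarrow> bool" where
  "distance_homothetic X t t' f \<longleftrightarrow>
     (\<exists>c::real. c > 0 \<and> (\<forall>p\<in>X. \<forall>q\<in>X. t' (f p) (f q) = ennreal c * t p q))"

end

theory Submission
  imports Defs
begin

text \<open>
  Since \<open>\<tau>'(f p, f q) = c \<tau>(p, q)\<close> and \<open>\<tau> > 0\<close> exactly on \<open>\<ll>\<close>, the map \<open>f\<close> preserves and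
  reflects the chronological relation. In the strongly causal space \<open>X\<close> the Alexandrov topology
  is the (Hausdorff) metric topology, so points with the same chronological past and future
  coincide; hence \<open>f\<close> is injective, and as a chronological bijection it is a homeomorphism of
  the Alexandrov topologies. Thus the Alexandrov topology of \<open>Y\<close> is Hausdorff, and this forces
  strong causality of \<open>Y\<close>: the Alexandrov topology is always coarser than the metric one, and
  conversely a small metric sphere \<open>S\<close> around \<open>y\<close> is compact (local compactness), hence
  Alexandrov closed, so some timelike diamond around \<open>y\<close> avoids \<open>S\<close>; such a diamond lies
  inside the ball, since a timelike curve from inside the ball to a point outside would cross \<open>S\<close>.
  With both Alexandrov topologies equal to the metric ones, \<open>f\<close> is a metric homeomorphism.
\<close>

subsection \<open>Generated topologies\<close>

lemma generate_topology_on_image: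
  assumes "generate_topology_on S U" "inj_on f (\<Union>S)"
    and "\<And>s. s \<in> S \<Longrightarrow> generate_topology_on S' (f ` s)"
  shows "generate_topology_on S' (f ` U)"
  using assms(1)
proof (induction rule: generate_topology_on.induct)
  case Empty
  then show ?case by (simp add: generate_topology_on.Empty)
next
  case (Int a b)
  have "a \<subseteq> \<Union>S" "b \<subseteq> \<Union>S"
    using Int.hyps topology_generated_by_topspace openin_subset openin_topology_generated_by_iff
    by metis+
  then have "f ` (a \<inter> b) = f ` a \<inter> f ` b"
    using inj_on_image_Int[OF assms(2)] by blast
  then show ?case using Int.IH generate_topology_on.Int by metis
next
  case (UN K)
  have "generate_topology_on S' (\<Union>((`) f ` K))"
    by (rule generate_topology_on.UN) (use UN.IH in blast)
  then show ?case by (simp add: image_Union)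
next
  case (Basis s)
  then show ?case using assms(3) by blast
qed

lemma generate_topology_on_indistinguishable:
  assumes "generate_topology_on S U" "\<And>s. s \<in> S \<Longrightarrow> p \<in> s \<longleftrightarrow> q \<in> s"
  shows "p \<in> U \<longleftrightarrow> q \<in> U"
  using assms(1)
  by (induction rule: generate_topology_on.induct) (use assms(2) in auto)

lemma generate_topology_on_nhd_induct:
  assumes "generate_topology_on S U" "x \<in> U"
    and basis: "\<And>s. s \<in> S \<Longrightarrow> x \<in> s \<Longrightarrow> P s"
    and Int: "\<And>A B. P A \<Longrightarrow> P B \<Longrightarrow> P (A \<inter> B)"
    and mono: "\<And>A B. P A \<Longrightarrow> A \<subseteq> B \<Longrightarrow> P B"
  shows "P U"
  using assms(1,2)
proof (induction rule: generate_topology_on.induct)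
  case (UN K)
  then obtain k where "k \<in> K" "x \<in> k" by blast
  then show ?case using UN.IH mono by (meson Union_upper)
qed (use basis Int in auto)

subsection \<open>The Alexandrov topology\<close>

definition timelike_diamond :: "'a set \<Rightarrow> ('a \<Rightarrow> 'a \<Rightarrow> bool) \<Rightarrow> 'a \<Rightarrow> 'a \<Rightarrow> 'a set" where
  "timelike_diamond X ll p q = {z\<in>X. ll p z} \<inter> {z\<in>X. ll z q}"

definition alexandrov_subbase :: "'a set \<Rightarrow> ('a \<Rightarrow> 'a \<Rightarrow> bool) \<Rightarrow> 'a set set" where
  "alexandrov_subbase X ll = insert X {timelike_diamond X ll p q | p q. p \<in> X \<and> q \<in> X}"

lemma alexandrov_topology_eq:
  "alexandrov_topology X ll = topology_generated_by (alexandrov_subbase X ll)"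
  unfolding alexandrov_topology_def alexandrov_subbase_def timelike_diamond_def ..

lemma Union_alexandrov_subbase: "\<Union>(alexandrov_subbase X ll) = X"
  by (auto simp: alexandrov_subbase_def timelike_diamond_def)

lemma topspace_alexandrov_topology [simp]: "topspace (alexandrov_topology X ll) = X"
  by (simp add: alexandrov_topology_eq Union_alexandrov_subbase)

lemma alexandrov_subbaseE:
  assumes "s \<in> alexandrov_subbase X ll"
  obtains "s = X" | p q where "p \<in> X" "q \<in> X" "s = timelike_diamond X ll p q"
  using assms unfolding alexandrov_subbase_def by blast

lemma openin_alexandrov_timelike_diamond:
  "p \<in> X \<Longrightarrow> q \<in> X \<Longrightarrow> openin (alexandrov_topology X ll) (timelike_diamond X ll p q)"
  unfolding alexandrov_topology_eq alexandrov_subbase_def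
  by (rule topology_generated_by_Basis) blast

lemma lorentzian_pre_length_space_Metric_space:
  "lorentzian_pre_length_space X d ll le t \<Longrightarrow> Metric_space X d"
  by (simp add: lorentzian_pre_length_space_def)

lemma lorentzian_pre_length_space_pos_iff:
  assumes "lorentzian_pre_length_space X d ll le t" "x \<in> X" "y \<in> X"
  shows "0 < t x y \<longleftrightarrow> ll x y"
proof -
  have "\<forall>x\<in>X. \<forall>y\<in>X. 0 < t x y \<longleftrightarrow> ll x y"
    using assms(1) unfolding lorentzian_pre_length_space_def by (elim conjE)
  then show ?thesis using assms(2,3) by blast
qed

lemma lorentzian_length_space_pre:
  "lorentzian_length_space X d ll le t \<Longrightarrow> lorentzian_pre_length_space X d ll le t"
  unfolding lorentzian_length_space_def by (elim conjE)

lemma lorentzian_pre_length_space_chronology_trans: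
  assumes "lorentzian_pre_length_space X d ll le t" "x \<in> X" "y \<in> X" "z \<in> X" "ll x y" "ll y z"
  shows "ll x z"
proof -
  have "\<forall>x\<in>X. \<forall>y\<in>X. \<forall>z\<in>X. ll x y \<and> ll y z \<longrightarrow> ll x z"
    using assms(1) unfolding lorentzian_pre_length_space_def causal_space_def by (elim conjE)
  then show ?thesis using assms(2-) by blast
qed

lemma timelike_diamond_mono:
  assumes "lorentzian_pre_length_space X d ll le t" "p \<in> X" "q \<in> X"
    and "a \<in> X" "ll p a" "b \<in> X" "ll b q"
  shows "timelike_diamond X ll a b \<subseteq> timelike_diamond X ll p q"
  using assms lorentzian_pre_length_space_chronology_trans[OF assms(1)]
  unfolding timelike_diamond_def by blast

lemma openin_chronological_future_past:
  assumes L: "lorentzian_pre_length_space X d ll le t" and a: "a \<in> X"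
  shows "openin (Metric_space.mtopology X d) {z\<in>X. ll a z}"
    and "openin (Metric_space.mtopology X d) {z\<in>X. ll z a}"
proof -
  interpret M: Metric_space X d
    using L by (rule lorentzian_pre_length_space_Metric_space)
  have lsc: "lsc_on X d t"
    using L unfolding lorentzian_pre_length_space_def by (elim conjE)
  note pos = lorentzian_pre_length_space_pos_iff[OF L]
  have near: "\<exists>e>0. M.mball p e \<subseteq> {z\<in>X. ll z q} \<and> M.mball q e \<subseteq> {z\<in>X. ll p z}"
    if pq: "p \<in> X" "q \<in> X" "ll p q" for p q
  proof -
    obtain e where e: "e > 0" "\<forall>p'\<in>X. \<forall>q'\<in>X. d p p' < e \<and> d q q' < e \<longrightarrow> 0 < t p' q'"
      using lsc pq pos unfolding lsc_on_def by blast
    have "M.mball p e \<subseteq> {z\<in>X. ll z q}"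
    proof
      fix z assume "z \<in> M.mball p e"
      then have "z \<in> X" "d p z < e" by simp_all
      then show "z \<in> {z\<in>X. ll z q}" using e pq pos[of z q] by simp
    qed
    moreover have "M.mball q e \<subseteq> {z\<in>X. ll p z}"
    proof
      fix z assume "z \<in> M.mball q e"
      then have "z \<in> X" "d q z < e" by simp_all
      then show "z \<in> {z\<in>X. ll p z}" using e pq pos[of p z] by simp
    qed
    ultimately show ?thesis using e(1) by blast
  qed
  have "\<exists>r>0. M.mball z r \<subseteq> {z\<in>X. ll a z}" if "z \<in> {z\<in>X. ll a z}" for z
    using near[of a z] that a by blast
  moreover have "\<exists>r>0. M.mball z r \<subseteq> {z\<in>X. ll z a}" if "z \<in> {z\<in>X. ll z a}" for z
    using near[of z a] that a by blast
  ultimately show "openin M.mtopology {z\<in>X. ll a z}" "openin M.mtopology {z\<in>X. ll z a}"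
    unfolding M.openin_mtopology by auto
qed

lemma openin_timelike_diamond:
  assumes "lorentzian_pre_length_space X d ll le t" "p \<in> X" "q \<in> X"
  shows "openin (Metric_space.mtopology X d) (timelike_diamond X ll p q)"
  unfolding timelike_diamond_def
  using openin_chronological_future_past[OF assms(1)] assms(2,3) by blast

lemma openin_alexandrov_imp_openin_mtopology:
  assumes "lorentzian_pre_length_space X d ll le t" "openin (alexandrov_topology X ll) U"
  shows "openin (Metric_space.mtopology X d) U"
proof -
  interpret M: Metric_space X d
    using assms(1) by (rule lorentzian_pre_length_space_Metric_space)
  have "openin M.mtopology s" if "s \<in> alexandrov_subbase X ll" for s
    using that by (cases rule: alexandrov_subbaseE) (auto intro: openin_timelike_diamond[OF assms(1)])
  with assms(2) show ?thesis
    unfolding alexandrov_topology_eq openin_topology_generated_by_iff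
    using generate_topology_on_coarsest[of "openin M.mtopology"] istopology_openin by blast
qed

lemma alexandrov_open_contains_timelike_diamonds:
  assumes L: "lorentzian_pre_length_space X d ll le t"
    and "openin (alexandrov_topology X ll) U" "x \<in> U"
  obtains Wm Wp where "openin (Metric_space.mtopology X d) Wm" "openin (Metric_space.mtopology X d) Wp"
    "x \<in> Wm" "x \<in> Wp" "\<And>a b. a \<in> Wm \<Longrightarrow> b \<in> Wp \<Longrightarrow> timelike_diamond X ll a b \<subseteq> U"
proof -
  interpret M: Metric_space X d
    using L by (rule lorentzian_pre_length_space_Metric_space)
  define P where "P V \<longleftrightarrow> (\<exists>Wm Wp. openin M.mtopology Wm \<and> openin M.mtopology Wp \<and>
     x \<in> Wm \<and> x \<in> Wp \<and> (\<forall>a\<in>Wm. \<forall>b\<in>Wp. timelike_diamond X ll a b \<subseteq> V))" for V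
  have "P U"
    using assms(2,3) unfolding alexandrov_topology_eq openin_topology_generated_by_iff
  proof (rule generate_topology_on_nhd_induct)
    fix s assume "s \<in> alexandrov_subbase X ll" "x \<in> s"
    then show "P s"
    proof (cases rule: alexandrov_subbaseE)
      case 1
      have "openin M.mtopology X"
        using openin_topspace M.topspace_mtopology by metis
      then show ?thesis
        unfolding P_def timelike_diamond_def using 1 \<open>x \<in> s\<close> by blast
    next
      case (2 p q)
      then show ?thesis
        unfolding P_def using \<open>x \<in> s\<close> timelike_diamond_mono[OF L 2(1,2)]
          openin_chronological_future_past[OF L 2(1)] openin_chronological_future_past[OF L 2(2)]
        by (intro exI[of _ "{z\<in>X. ll p z}"] exI[of _ "{z\<in>X. ll z q}"]) (auto simp: timelike_diamond_def)
    qed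
  next
    fix A B assume "P A" "P B"
    then obtain Wm Wp Wm' Wp' where
      "openin M.mtopology Wm" "openin M.mtopology Wp" "x \<in> Wm" "x \<in> Wp"
      "\<forall>a\<in>Wm. \<forall>b\<in>Wp. timelike_diamond X ll a b \<subseteq> A"
      "openin M.mtopology Wm'" "openin M.mtopology Wp'" "x \<in> Wm'" "x \<in> Wp'"
      "\<forall>a\<in>Wm'. \<forall>b\<in>Wp'. timelike_diamond X ll a b \<subseteq> B"
      unfolding P_def by blast
    then show "P (A \<inter> B)"
      unfolding P_def by (intro exI[of _ "Wm \<inter> Wm'"] exI[of _ "Wp \<inter> Wp'"]) auto
  next
    fix A B assume "P A" "A \<subseteq> B"
    then show "P B"
      unfolding P_def by (meson order_trans)
  qed
  then obtain Wm Wp where "openin M.mtopology Wm" "openin M.mtopology Wp" "x \<in> Wm" "x \<in> Wp"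
    "\<forall>a\<in>Wm. \<forall>b\<in>Wp. timelike_diamond X ll a b \<subseteq> U"
    unfolding P_def by blast
  then show ?thesis
    by (intro that[of Wm Wp]) auto
qed

lemma continuous_map_mtopology_alexandrov:
  assumes "lorentzian_pre_length_space X d ll le t"
  shows "continuous_map (Metric_space.mtopology X d) (alexandrov_topology X ll) id"
proof -
  interpret M: Metric_space X d
    using assms by (rule lorentzian_pre_length_space_Metric_space)
  have "openin M.mtopology {x \<in> X. x \<in> U}" if "openin (alexandrov_topology X ll) U" for U
  proof -
    have "{x \<in> X. x \<in> U} = U" using openin_subset[OF that] by auto
    then show ?thesis using openin_alexandrov_imp_openin_mtopology[OF assms that] by simp
  qed
  then show ?thesis
    unfolding continuous_map_def by auto
qed

lemma closedin_alexandrov_if_compactin: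
  assumes L: "lorentzian_pre_length_space X d ll le t"
    and H: "Hausdorff_space (alexandrov_topology X ll)"
    and K: "compactin (Metric_space.mtopology X d) K"
  shows "closedin (alexandrov_topology X ll) K"
proof -
  have "compactin (alexandrov_topology X ll) (id ` K)"
    using K continuous_map_mtopology_alexandrov[OF L] by (rule image_compactin)
  then show ?thesis
    using H by (simp add: compactin_imp_closedin)
qed

subsection \<open>Timelike curves\<close>

lemma continuous_on_Icc_approx_from_interior:
  fixes h :: "real \<Rightarrow> real"
  assumes "continuous_on {a..b} h" "a < b" "s \<in> {a..b}" "e > 0"
  shows "\<exists>t\<in>{a<..<b}. \<bar>h t - h s\<bar> < e"
proof -
  have lim: "(h \<longlongrightarrow> h s) (at s within {a<..<b})"
    using assms(1,3) by (meson continuous_on_def greaterThanLessThan_subseteq_atLeastAtMost_iff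
        less_eq_real_def tendsto_within_subset)
  have "s islimpt {a<..<b}"
  proof (cases "s = b")
    case True
    then show ?thesis using assms(2) by (simp add: islimpt_greaterThanLessThan2)
  next
    case False
    then have "s islimpt {s<..<b}"
      using assms(3) by (simp add: islimpt_greaterThanLessThan1)
    moreover have "{s<..<b} \<subseteq> {a<..<b}" using assms(3) by auto
    ultimately show ?thesis by (rule islimpt_subset)
  qed
  then have "at s within {a<..<b} \<noteq> bot"
    by (simp add: trivial_limit_within)
  moreover have "\<forall>\<^sub>F t in at s within {a<..<b}. \<bar>h t - h s\<bar> < e"
    using tendsto_iff[THEN iffD1, OF lim] assms(4) by (simp add: dist_real_def)
  moreover have "\<forall>\<^sub>F t in at s within {a<..<b}. t \<in> {a<..<b}"
    by (simp add: eventually_at_filter)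
  ultimately show ?thesis
    using eventually_happens' eventually_conj by (metis (mono_tags, lifting))
qed

lemma lipschitz_curve_continuous_on_mdist:
  assumes "lipschitz_curve X d \<gamma> I" "Metric_space X d" "y \<in> X"
  shows "continuous_on I (\<lambda>s. d y (\<gamma> s))"
proof -
  interpret M: Metric_space X d by fact
  obtain L where L: "\<forall>s\<in>I. \<forall>t\<in>I. d (\<gamma> s) (\<gamma> t) \<le> L * \<bar>s - t\<bar>" and img: "\<gamma> ` I \<subseteq> X"
    using assms(1) unfolding lipschitz_curve_def by blast
  have "\<bar>L\<bar>-lipschitz_on I (\<lambda>s. d y (\<gamma> s))"
  proof (rule lipschitz_onI)
    fix s t assume st: "s \<in> I" "t \<in> I"
    have "\<bar>d y (\<gamma> s) - d y (\<gamma> t)\<bar> \<le> d (\<gamma> s) (\<gamma> t)"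
      using M.mdist_reverse_triangle[of "\<gamma> s" y "\<gamma> t"] img st assms(3) by (force simp: M.commute)
    also have "\<dots> \<le> \<bar>L\<bar> * \<bar>s - t\<bar>"
      using L st by (meson abs_ge_self abs_ge_zero mult_right_mono order_trans)
    finally show "dist (d y (\<gamma> s)) (d y (\<gamma> t)) \<le> \<bar>L\<bar> * dist s t"
      by (simp add: dist_real_def)
  qed simp
  then show ?thesis by (rule lipschitz_on_continuous_on)
qed

lemma timelike_curve_from_points_near_ends:
  assumes \<gamma>: "timelike_curve_from X d ll \<gamma> a b u v" and "Metric_space X d"
    and "x \<in> {u, v}" "e > 0"
  shows "\<exists>w\<in>X. d x w < e \<and> ll u w \<and> ll w v"
proof -
  interpret M: Metric_space X d by fact
  have ab: "a < b" and lip: "lipschitz_curve X d \<gamma> {a..b}" and ends: "\<gamma> a = u" "\<gamma> b = v"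
    and chron: "\<And>s t. s \<in> {a..b} \<Longrightarrow> t \<in> {a..b} \<Longrightarrow> s < t \<Longrightarrow> ll (\<gamma> s) (\<gamma> t)"
    using \<gamma> unfolding timelike_curve_from_def fd_timelike_curve_def by auto
  have img: "\<gamma> ` {a..b} \<subseteq> X"
    using lip unfolding lipschitz_curve_def by blast
  have "a \<in> {a..b}" "b \<in> {a..b}" using ab by auto
  then obtain s where s: "s \<in> {a..b}" "\<gamma> s = x"
    using assms(3) ends by blast
  have x: "x \<in> X" using s img by blast
  obtain t where t: "t \<in> {a<..<b}" "\<bar>d x (\<gamma> t) - d x (\<gamma> s)\<bar> < e"
    using continuous_on_Icc_approx_from_interior[OF
        lipschitz_curve_continuous_on_mdist[OF lip \<open>Metric_space X d\<close> x] ab s(1) assms(4)]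
    by blast
  have "d x (\<gamma> t) < e" using t s x by simp
  moreover have "\<gamma> t \<in> X" using t img by auto
  moreover have "ll u (\<gamma> t)" "ll (\<gamma> t) v"
    using chron[of a t] chron[of t b] t ends by auto
  ultimately show ?thesis by blast
qed

lemma lorentzian_length_space_timelike_near:
  assumes L: "lorentzian_length_space X d ll le t" and y: "y \<in> X" and e: "e > 0"
  shows "\<exists>p\<in>X. d y p < e \<and> ll p y" and "\<exists>q\<in>X. d y q < e \<and> ll y q"
proof -
  have M: "Metric_space X d"
    using L lorentzian_length_space_pre lorentzian_pre_length_space_Metric_space by blast
  have cpc: "causally_path_connected X d ll le"
    using L unfolding lorentzian_length_space_def by (elim conjE)
  have loc: "localizable X d ll le t"
    using L unfolding lorentzian_length_space_def by (elim conjE)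
  obtain \<Omega> where \<Omega>: "is_nbhd X d y \<Omega>" "\<forall>y\<in>\<Omega>. (\<exists>z\<in>\<Omega>. ll y z) \<and> (\<exists>z\<in>\<Omega>. ll z y)"
    using loc y unfolding localizable_def by metis
  have "y \<in> \<Omega>" "\<Omega> \<subseteq> X"
    using \<Omega>(1) unfolding is_nbhd_def by auto
  then obtain z1 z2 where z: "z1 \<in> X" "z2 \<in> X" "ll z1 y" "ll y z2"
    using \<Omega>(2) by blast
  obtain \<gamma>1 a1 b1 where "timelike_curve_from X d ll \<gamma>1 a1 b1 z1 y"
    using cpc z y unfolding causally_path_connected_def by blast
  from timelike_curve_from_points_near_ends[OF this M _ e, of y]
  show "\<exists>p\<in>X. d y p < e \<and> ll p y" by blast
  obtain \<gamma>2 a2 b2 where "timelike_curve_from X d ll \<gamma>2 a2 b2 y z2"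
    using cpc z y unfolding causally_path_connected_def by blast
  from timelike_curve_from_points_near_ends[OF this M _ e, of y]
  show "\<exists>q\<in>X. d y q < e \<and> ll y q" by blast
qed

lemma timelike_diamond_subset_mball:
  assumes L: "lorentzian_pre_length_space X d ll le t"
    and cpc: "causally_path_connected X d ll le"
    and p: "p \<in> Metric_space.mball X d y r" and q: "q \<in> X"
    and disj: "timelike_diamond X ll p q \<inter>
      (Metric_space.mcball X d y r - Metric_space.mball X d y r) = {}"
  shows "timelike_diamond X ll p q \<subseteq> Metric_space.mball X d y r"
proof
  interpret M: Metric_space X d
    using L by (rule lorentzian_pre_length_space_Metric_space)
  have y: "y \<in> X" and pX: "p \<in> X" and "d y p < r" using p by auto
  fix z assume "z \<in> timelike_diamond X ll p q"
  then have z: "z \<in> X" "ll p z" "ll z q" by (auto simp: timelike_diamond_def)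
  show "z \<in> M.mball y r"
  proof (rule ccontr)
    assume "z \<notin> M.mball y r"
    then have "r \<le> d y z" using y z by auto
    obtain \<gamma> a b where \<gamma>: "timelike_curve_from X d ll \<gamma> a b p z"
      using cpc pX z unfolding causally_path_connected_def by blast
    have ab: "a < b" and lip: "lipschitz_curve X d \<gamma> {a..b}" and ends: "\<gamma> a = p" "\<gamma> b = z"
      and chron: "\<And>s t. s \<in> {a..b} \<Longrightarrow> t \<in> {a..b} \<Longrightarrow> s < t \<Longrightarrow> ll (\<gamma> s) (\<gamma> t)"
      using \<gamma> unfolding timelike_curve_from_def fd_timelike_curve_def by auto
    obtain s where s: "a \<le> s" "s \<le> b" "d y (\<gamma> s) = r"
      using IVT'[of "\<lambda>s. d y (\<gamma> s)" a r b] ab \<open>d y p < r\<close> \<open>r \<le> d y z\<close> ends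
        lipschitz_curve_continuous_on_mdist[OF lip M.Metric_space_axioms y]
      by auto
    have "a < s" using s ends \<open>d y p < r\<close> by (metis order_le_less order_less_irrefl)
    define w where "w = \<gamma> s"
    have w: "w \<in> X" using lip s unfolding lipschitz_curve_def w_def by auto
    have "ll p w" using chron[of a s] ab s \<open>a < s\<close> ends by (simp add: w_def)
    moreover have "ll w q"
    proof (cases "s = b")
      case True
      then show ?thesis using z ends by (simp add: w_def)
    next
      case False
      then have "ll w z" using chron[of s b] s ends by (simp add: w_def)
      then show ?thesis using lorentzian_pre_length_space_chronology_trans[OF L w z(1) q] z by blast
    qed
    moreover have "w \<in> M.mcball y r - M.mball y r" using w y s by (simp add: w_def)
    ultimately show False using disj w by (auto simp: timelike_diamond_def)
  qed
qed

lemma alexandrov_open_contains_timelike_diamond_around: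
  assumes L: "lorentzian_length_space X d ll le t"
    and U: "openin (alexandrov_topology X ll) U" "y \<in> U" and e: "e > 0"
  obtains p q where "p \<in> X" "q \<in> X" "d y p < e" "ll p y" "ll y q"
    "timelike_diamond X ll p q \<subseteq> U"
proof -
  have LP: "lorentzian_pre_length_space X d ll le t"
    using L by (rule lorentzian_length_space_pre)
  interpret M: Metric_space X d
    using LP by (rule lorentzian_pre_length_space_Metric_space)
  have y: "y \<in> X" using U openin_subset by fastforce
  obtain Wm Wp where W: "openin M.mtopology Wm" "openin M.mtopology Wp" "y \<in> Wm" "y \<in> Wp"
    "\<And>a b. a \<in> Wm \<Longrightarrow> b \<in> Wp \<Longrightarrow> timelike_diamond X ll a b \<subseteq> U"
    using alexandrov_open_contains_timelike_diamonds[OF LP U] by metis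
  obtain e1 where e1: "e1 > 0" "M.mball y e1 \<subseteq> Wm" using W(1,3) M.openin_mtopology by metis
  obtain e2 where e2: "e2 > 0" "M.mball y e2 \<subseteq> Wp" using W(2,4) M.openin_mtopology by metis
  obtain p where p: "p \<in> X" "d y p < min e1 e" "ll p y"
    using lorentzian_length_space_timelike_near(1)[OF L y] e1(1) e by (metis min_less_iff_conj)
  obtain q where q: "q \<in> X" "d y q < e2" "ll y q"
    using lorentzian_length_space_timelike_near(2)[OF L y e2(1)] by blast
  have "p \<in> Wm" "q \<in> Wp" using p q e1 e2 y by auto
  then show ?thesis
    using that[of p q] W(5) p q by simp
qed

subsection \<open>Strong causality from a Hausdorff Alexandrov topology\<close>

lemma (in Metric_space) locally_compact_space_compactin_mcball:
  assumes "locally_compact_space mtopology" "y \<in> M" "r > 0"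
  obtains \<rho> where "0 < \<rho>" "\<rho> < r" "compactin mtopology (mcball y \<rho>)"
proof -
  obtain U K where "openin mtopology U" "compactin mtopology K" "y \<in> U" "U \<subseteq> K"
    using assms(1,2) unfolding locally_compact_space_def by auto
  then obtain r0 where "r0 > 0" "mball y r0 \<subseteq> K"
    using openin_mtopology by (metis order_trans)
  define \<rho> where "\<rho> = min r r0 / 2"
  have \<rho>: "0 < \<rho>" "\<rho> < r" "\<rho> < r0" using assms(3) \<open>r0 > 0\<close> by (auto simp: \<rho>_def)
  have "compactin mtopology (mcball y \<rho>)"
    using closed_compactin[OF \<open>compactin mtopology K\<close> _ closedin_mcball]
      mcball_subset_mball_concentric[OF \<rho>(3)] \<open>mball y r0 \<subseteq> K\<close> by blast
  with \<rho> show ?thesis using that by blast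
qed

lemma timelike_diamond_around_within_mball:
  assumes L: "lorentzian_length_space X d ll le t"
    and lc: "locally_compact_space (Metric_space.mtopology X d)"
    and H: "Hausdorff_space (alexandrov_topology X ll)"
    and y: "y \<in> X" and r: "r > 0"
  obtains p q where "p \<in> X" "q \<in> X" "ll p y" "ll y q"
    "timelike_diamond X ll p q \<subseteq> Metric_space.mball X d y r"
proof -
  have LP: "lorentzian_pre_length_space X d ll le t"
    using L by (rule lorentzian_length_space_pre)
  interpret M: Metric_space X d
    using LP by (rule lorentzian_pre_length_space_Metric_space)
  have cpc: "causally_path_connected X d ll le"
    using L unfolding lorentzian_length_space_def by (elim conjE)
  obtain \<rho> where \<rho>: "0 < \<rho>" "\<rho> < r" "compactin M.mtopology (M.mcball y \<rho>)"
    using M.locally_compact_space_compactin_mcball[OF lc y r] by blast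
  define S where "S = M.mcball y \<rho> - M.mball y \<rho>"
  have "compactin M.mtopology S"
    unfolding S_def using \<rho>(3) by (rule closed_compactin) auto
  then have "closedin (alexandrov_topology X ll) S"
    by (rule closedin_alexandrov_if_compactin[OF LP H])
  then have "openin (alexandrov_topology X ll) (X - S)"
    using openin_diff[OF openin_topspace] by fastforce
  moreover have "y \<in> X - S" using y \<rho> by (simp add: S_def)
  ultimately obtain p q where pq: "p \<in> X" "q \<in> X" "d y p < \<rho>" "ll p y" "ll y q"
    "timelike_diamond X ll p q \<subseteq> X - S"
    by (rule alexandrov_open_contains_timelike_diamond_around[OF L _ _ \<rho>(1)])
  moreover have "p \<in> M.mball y \<rho>" using pq y by simp
  ultimately have "timelike_diamond X ll p q \<subseteq> M.mball y \<rho>"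
    using timelike_diamond_subset_mball[OF LP cpc _ pq(2)] unfolding S_def by blast
  also have "\<dots> \<subseteq> M.mball y r" using \<rho>(2) by auto
  finally show ?thesis using that pq by blast
qed

lemma strongly_causal_if_Hausdorff_alexandrov:
  assumes L: "lorentzian_length_space X d ll le t"
    and lc: "locally_compact_space (Metric_space.mtopology X d)"
    and H: "Hausdorff_space (alexandrov_topology X ll)"
  shows "strongly_causal X d ll"
proof -
  have LP: "lorentzian_pre_length_space X d ll le t"
    using L by (rule lorentzian_length_space_pre)
  interpret M: Metric_space X d
    using LP by (rule lorentzian_pre_length_space_Metric_space)
  have "openin (alexandrov_topology X ll) V" if V: "openin M.mtopology V" for V
  proof (subst openin_subopen, intro ballI)
    fix y assume "y \<in> V"
    then have "y \<in> X" using V M.openin_mtopology by blast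
    obtain r where "r > 0" "M.mball y r \<subseteq> V"
      using V \<open>y \<in> V\<close> M.openin_mtopology by metis
    obtain p q where pq: "p \<in> X" "q \<in> X" "ll p y" "ll y q"
      "timelike_diamond X ll p q \<subseteq> M.mball y r"
      using timelike_diamond_around_within_mball[OF L lc H \<open>y \<in> X\<close> \<open>r > 0\<close>] by blast
    have "openin (alexandrov_topology X ll) (timelike_diamond X ll p q)"
      using pq(1,2) by (rule openin_alexandrov_timelike_diamond)
    moreover have "y \<in> timelike_diamond X ll p q"
      using pq(3,4) \<open>y \<in> X\<close> by (simp add: timelike_diamond_def)
    ultimately show "\<exists>T. openin (alexandrov_topology X ll) T \<and> y \<in> T \<and> T \<subseteq> V"
      using pq(5) \<open>M.mball y r \<subseteq> V\<close> by blast
  qed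
  then show ?thesis
    unfolding strongly_causal_def topology_eq
    using openin_alexandrov_imp_openin_mtopology[OF LP] by blast
qed

subsection \<open>Chronological bijections\<close>

lemma distance_homothetic_chronology_iff:
  assumes LX: "lorentzian_pre_length_space X d ll le t"
    and LY: "lorentzian_pre_length_space Y d' ll' le' t'"
    and "f ` X \<subseteq> Y" "distance_homothetic X t t' f" "p \<in> X" "q \<in> X"
  shows "ll' (f p) (f q) \<longleftrightarrow> ll p q"
proof -
  obtain c :: real where "c > 0" "t' (f p) (f q) = ennreal c * t p q"
    using assms(4-6) unfolding distance_homothetic_def by blast
  then have "0 < t' (f p) (f q) \<longleftrightarrow> 0 < t p q"
    by (simp add: zero_less_iff_neq_zero)
  then show ?thesis
    using lorentzian_pre_length_space_pos_iff[OF LX assms(5,6)]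
      lorentzian_pre_length_space_pos_iff[OF LY, of "f p" "f q"] assms(3,5,6) by auto
qed

lemma strongly_causal_distinguishing:
  assumes sc: "strongly_causal X d ll" and "Metric_space X d" "p \<in> X" "q \<in> X"
    and past: "\<And>z. z \<in> X \<Longrightarrow> ll z p \<longleftrightarrow> ll z q"
    and future: "\<And>z. z \<in> X \<Longrightarrow> ll p z \<longleftrightarrow> ll q z"
  shows "p = q"
proof (rule ccontr)
  interpret M: Metric_space X d by fact
  assume "p \<noteq> q"
  let ?U = "M.mball p (d p q)"
  have "generate_topology_on (alexandrov_subbase X ll) ?U"
    using sc M.openin_mball[of p "d p q"]
    unfolding strongly_causal_def alexandrov_topology_eq
    by (simp flip: openin_topology_generated_by_iff)
  moreover have "p \<in> s \<longleftrightarrow> q \<in> s" if "s \<in> alexandrov_subbase X ll" for s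
    using that by (cases rule: alexandrov_subbaseE) (auto simp: timelike_diamond_def past future assms(3,4))
  ultimately have "p \<in> ?U \<longleftrightarrow> q \<in> ?U"
    by (rule generate_topology_on_indistinguishable)
  moreover have "p \<in> ?U" "q \<notin> ?U" using \<open>p \<noteq> q\<close> assms(3,4) by simp_all
  ultimately show False by blast
qed

lemma openin_alexandrov_topology_image:
  assumes f: "bij_betw f X Y" and chron: "\<And>p q. p \<in> X \<Longrightarrow> q \<in> X \<Longrightarrow> ll' (f p) (f q) \<longleftrightarrow> ll p q"
    and U: "openin (alexandrov_topology X ll) U"
  shows "openin (alexandrov_topology Y ll') (f ` U)"
proof -
  have fX: "f w \<in> Y" if "w \<in> X" for w
    using f that by (rule bij_betw_apply)
  have diamond: "f ` timelike_diamond X ll p q = timelike_diamond Y ll' (f p) (f q)"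
    if pq: "p \<in> X" "q \<in> X" for p q
  proof (intro equalityI subsetI)
    fix z assume "z \<in> f ` timelike_diamond X ll p q"
    then obtain w where w: "w \<in> timelike_diamond X ll p q" "z = f w" by blast
    then have "w \<in> X" "ll p w" "ll w q" unfolding timelike_diamond_def by blast+
    then have "f w \<in> Y" "ll' (f p) (f w)" "ll' (f w) (f q)"
      using pq chron fX by blast+
    then show "z \<in> timelike_diamond Y ll' (f p) (f q)"
      unfolding timelike_diamond_def w(2) by blast
  next
    fix z assume z: "z \<in> timelike_diamond Y ll' (f p) (f q)"
    then have "z \<in> Y" "ll' (f p) z" "ll' z (f q)" unfolding timelike_diamond_def by blast+
    moreover obtain w where w: "w \<in> X" "z = f w"
      using f \<open>z \<in> Y\<close> unfolding bij_betw_def by blast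
    ultimately have "ll p w" "ll w q"
      using pq chron by blast+
    then show "z \<in> f ` timelike_diamond X ll p q"
      unfolding timelike_diamond_def using w by blast
  qed
  have "generate_topology_on (alexandrov_subbase Y ll') (f ` s)" if "s \<in> alexandrov_subbase X ll" for s
    using that
  proof (cases rule: alexandrov_subbaseE)
    case 1
    then have "f ` s \<in> alexandrov_subbase Y ll'"
      using f by (simp add: bij_betw_def alexandrov_subbase_def)
    then show ?thesis by (rule generate_topology_on.Basis)
  next
    case (2 p q)
    then have "f ` s \<in> alexandrov_subbase Y ll'"
      using diamond fX unfolding alexandrov_subbase_def by blast
    then show ?thesis by (rule generate_topology_on.Basis)
  qed
  moreover have "inj_on f (\<Union>(alexandrov_subbase X ll))"
    using bij_betw_imp_inj_on[OF f] by (simp add: Union_alexandrov_subbase)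
  moreover have "generate_topology_on (alexandrov_subbase X ll) U"
    using U by (simp add: alexandrov_topology_eq openin_topology_generated_by_iff)
  ultimately show ?thesis
    unfolding alexandrov_topology_eq openin_topology_generated_by_iff
    using generate_topology_on_image by blast
qed

lemma homeomorphic_map_alexandrov_topology:
  assumes f: "bij_betw f X Y" and chron: "\<And>p q. p \<in> X \<Longrightarrow> q \<in> X \<Longrightarrow> ll' (f p) (f q) \<longleftrightarrow> ll p q"
  shows "homeomorphic_map (alexandrov_topology X ll) (alexandrov_topology Y ll') f"
proof (rule bijective_open_imp_homeomorphic_map)
  define g where "g = inv_into X f"
  have g: "bij_betw g Y X"
    unfolding g_def using f by (rule bij_betw_inv_into)
  have fg: "f (g y) = y" if "y \<in> Y" for y
    unfolding g_def using f that by (simp add: bij_betw_inv_into_right)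
  have gf: "g (f x) = x" if "x \<in> X" for x
    unfolding g_def using f that by (simp add: bij_betw_inv_into_left)
  have gchron: "ll (g a) (g b) \<longleftrightarrow> ll' a b" if "a \<in> Y" "b \<in> Y" for a b
    using chron[of "g a" "g b"] bij_betw_apply[OF g that(1)] bij_betw_apply[OF g that(2)] fg that
    by simp
  show "continuous_map (alexandrov_topology X ll) (alexandrov_topology Y ll') f"
    unfolding continuous_map_def
  proof (intro conjI allI impI)
    show "f \<in> topspace (alexandrov_topology X ll) \<rightarrow> topspace (alexandrov_topology Y ll')"
      using bij_betw_apply[OF f] by simp
  next
    fix V assume V: "openin (alexandrov_topology Y ll') V"
    have "{x \<in> X. f x \<in> V} = g ` V"
    proof (intro equalityI subsetI)
      fix x assume "x \<in> {x \<in> X. f x \<in> V}"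
      then show "x \<in> g ` V" using gf by (metis (mono_tags, lifting) image_eqI mem_Collect_eq)
    next
      fix x assume "x \<in> g ` V"
      moreover have "V \<subseteq> Y" using openin_subset[OF V] by simp
      ultimately show "x \<in> {x \<in> X. f x \<in> V}" using fg bij_betw_apply[OF g] by auto
    qed
    then show "openin (alexandrov_topology X ll) {x \<in> topspace (alexandrov_topology X ll). f x \<in> V}"
      using openin_alexandrov_topology_image[OF g gchron V] by simp
  qed
  show "open_map (alexandrov_topology X ll) (alexandrov_topology Y ll') f"
    unfolding open_map_def using openin_alexandrov_topology_image[where ll=ll and ll'=ll', OF f chron] by blast
  show "f ` topspace (alexandrov_topology X ll) = topspace (alexandrov_topology Y ll')"
    using f by (simp add: bij_betw_def)
  show "inj_on f (topspace (alexandrov_topology X ll))"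
    using f by (simp add: bij_betw_def)
qed

theorem theorem4p4:
  fixes d :: "'a \<Rightarrow> 'a \<Rightarrow> real" and ll le :: "'a \<Rightarrow> 'a \<Rightarrow> bool" and \<tau> :: "'a \<Rightarrow> 'a \<Rightarrow> ennreal"
    and d' :: "'b \<Rightarrow> 'b \<Rightarrow> real" and ll' le' :: "'b \<Rightarrow> 'b \<Rightarrow> bool" and \<tau>' :: "'b \<Rightarrow> 'b \<Rightarrow> ennreal"
    and X :: "'a set" and Y :: "'b set" and f :: "'a \<Rightarrow> 'b"
  assumes "lorentzian_length_space X d ll le \<tau>"
    and "lorentzian_length_space Y d' ll' le' \<tau>'"
    and "strongly_causal X d ll"
    and "locally_compact_space (Metric_space.mtopology Y d')"
    and "f ` X = Y"
    and "distance_homothetic X \<tau> \<tau>' f"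
  shows "homeomorphic_map (Metric_space.mtopology X d) (Metric_space.mtopology Y d') f
         \<and> strongly_causal Y d' ll'"
proof -
  have LX: "lorentzian_pre_length_space X d ll le \<tau>"
    and LY: "lorentzian_pre_length_space Y d' ll' le' \<tau>'"
    using assms(1,2) by (simp_all add: lorentzian_length_space_pre)
  have chron: "ll' (f p) (f q) \<longleftrightarrow> ll p q" if "p \<in> X" "q \<in> X" for p q
    using distance_homothetic_chronology_iff[OF LX LY _ assms(6) that] assms(5) by blast
  have "inj_on f X"
  proof (rule inj_onI)
    fix p q assume "p \<in> X" "q \<in> X" "f p = f q"
    then show "p = q"
      using strongly_causal_distinguishing[OF assms(3) lorentzian_pre_length_space_Metric_space[OF LX]]
        chron by metis
  qed
  then have hA: "homeomorphic_map (alexandrov_topology X ll) (alexandrov_topology Y ll') f"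
    using homeomorphic_map_alexandrov_topology assms(5) chron by (metis bij_betw_def)
  have "Hausdorff_space (alexandrov_topology X ll)"
    using assms(3) Metric_space.Hausdorff_space_mtopology[OF lorentzian_pre_length_space_Metric_space[OF LX]]
    unfolding strongly_causal_def by simp
  then have "Hausdorff_space (alexandrov_topology Y ll')"
    using hA homeomorphic_Hausdorff_space homeomorphic_map_imp_homeomorphic_space by blast
  then have "strongly_causal Y d' ll'"
    using strongly_causal_if_Hausdorff_alexandrov[OF assms(2,4)] by blast
  then show ?thesis
    using hA assms(3) unfolding strongly_causal_def by simp
qed

end
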